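(* Let $X,Y$ be Polish, $m$ a finite non-negative Borel measure on $X$, and $E:L^0(X,Y;m)\to[0,+\infty]$ Borel (no further assumption). If $\mathcal{T}:\mathcal{M}_{\pi_1\to m}(X\times Y)\to[0,+\infty]$ is convex, lower semi-continuous for narrow convergence, and satisfies $\mathcal{T}(\boldsymbol{\mu}_u)\le E(u)$ for all $u\in L^0(X,Y;m)$, then $\mathcal{T}\le\mathcal{T}_E$.
   Context: $L^0(X,Y;m)$: Borel maps modulo $m$-a.e. equality, convergence in $m$-measure. $\mathcal{M}_{\pi_1\to m}(X\times Y)$: finite non-negative Borel measures on $X\times Y$ with first marginal $m$, narrow topology. $\boldsymbol{\mu}_u=(\mathrm{Id},u)_\#m$. $\Pi(\boldsymbol{\mu})$: Borel probability measures $Q$ on $L^0(X,Y;m)$ with $\int\varphi\,d\boldsymbol{\mu}=\int\big(\int_X\varphi(x,u(x))\,m(dx)\big)Q(du)$ for all $\varphi\in C_b(X\times Y)$. $\mathcal{T}_E(\boldsymbol{\mu})=\inf\{\int E\,dQ:Q\in\Pi(\boldsymbol{\mu})\}$. *)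

theory Defs
  imports "HOL-Analysis.Analysis" "HOL-Probability.Probability"
begin

definition Cb :: "('a::topological_space \<Rightarrow> real) set" where
  "Cb = {\<phi>. continuous_on UNIV \<phi> \<and> bounded (range \<phi>)}"

text \<open>Representatives of L0(X,Y;m): Borel maps X to Y.  The quotient by m-a.e.
  equality is handled through the pseudometric below: all open sets of the
  pseudometric topology, hence all Borel sets, are saturated for a.e. equality.\<close>
definition L0 :: "'x::topological_space measure \<Rightarrow> ('x \<Rightarrow> 'y::metric_space) set" where
  "L0 m = {u. u \<in> borel_measurable m}"

text \<open>Pseudometric metrizing convergence in m-measure (m finite).\<close>
definition L0_dist :: "'x::topological_space measure \<Rightarrow> ('x \<Rightarrow> 'y::metric_space) \<Rightarrow> ('x \<Rightarrow> 'y) \<Rightarrow> real" where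
  "L0_dist m u v = (\<integral>x. min 1 (dist (u x) (v x)) \<partial>m)"

definition L0_open :: "'x::topological_space measure \<Rightarrow> ('x \<Rightarrow> 'y::metric_space) set \<Rightarrow> bool" where
  "L0_open m U \<longleftrightarrow> U \<subseteq> L0 m \<and>
     (\<forall>u\<in>U. \<exists>r>0. \<forall>v\<in>L0 m. L0_dist m u v < r \<longrightarrow> v \<in> U)"

definition L0_borel :: "'x::topological_space measure \<Rightarrow> ('x \<Rightarrow> 'y::metric_space) measure" where
  "L0_borel m = sigma (L0 m) {U. L0_open m U}"

definition Mpi :: "'x::topological_space measure \<Rightarrow> ('x \<times> 'y::topological_space) measure set" where
  "Mpi m = {\<mu>. sets \<mu> = sets borel \<and> finite_measure \<mu> \<and> distr \<mu> borel fst = m}"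

definition narrow_top :: "'x::topological_space measure \<Rightarrow> ('x \<times> 'y::topological_space) measure topology" where
  "narrow_top m = topology_generated_by
     {{\<mu> \<in> Mpi m. (\<integral>z. \<phi> z \<partial>\<mu>) \<in> U} | \<phi> U. \<phi> \<in> Cb \<and> open U}"

definition graph_measure :: "'x::topological_space measure \<Rightarrow> ('x \<Rightarrow> 'y::topological_space) \<Rightarrow> ('x \<times> 'y) measure" where
  "graph_measure m u = distr m borel (\<lambda>x. (x, u x))"

definition mix :: "real \<Rightarrow> ('a::topological_space) measure \<Rightarrow> 'a measure \<Rightarrow> 'a measure" where
  "mix t \<mu> \<nu> = measure_of UNIV (sets borel)
     (\<lambda>A. ennreal t * emeasure \<mu> A + ennreal (1 - t) * emeasure \<nu> A)"

definition convex_fun_on_Mpi :: "'x::topological_space measure \<Rightarrow> (('x \<times> 'y::topological_space) measure \<Rightarrow> ennreal) \<Rightarrow> bool" where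
  "convex_fun_on_Mpi m T \<longleftrightarrow> (\<forall>\<mu>\<in>Mpi m. \<forall>\<nu>\<in>Mpi m. \<forall>t\<in>{0..1}.
     T (mix t \<mu> \<nu>) \<le> ennreal t * T \<mu> + ennreal (1 - t) * T \<nu>)"

definition lsc_narrow :: "'x::topological_space measure \<Rightarrow> (('x \<times> 'y::topological_space) measure \<Rightarrow> ennreal) \<Rightarrow> bool" where
  "lsc_narrow m T \<longleftrightarrow> (\<forall>c. openin (narrow_top m) {\<mu> \<in> Mpi m. c < T \<mu>})"

definition Plans :: "'x::topological_space measure \<Rightarrow> ('x \<times> 'y::metric_space) measure \<Rightarrow> ('x \<Rightarrow> 'y) measure set" where
  "Plans m \<mu> = {Q. prob_space Q \<and> space Q = L0 m \<and> sets Q = sets (L0_borel m) \<and>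
     (\<forall>\<phi>\<in>Cb. (\<integral>z. \<phi> z \<partial>\<mu>) = (\<integral>u. (\<integral>x. \<phi> (x, u x) \<partial>m) \<partial>Q))}"

definition T_E :: "'x::topological_space measure \<Rightarrow> (('x \<Rightarrow> 'y::metric_space) \<Rightarrow> ennreal) \<Rightarrow> ('x \<times> 'y) measure \<Rightarrow> ennreal" where
  "T_E m E \<mu> = (INF Q\<in>Plans m \<mu>. \<integral>\<^sup>+ u. E u \<partial>Q)"

end

theory Submission
  imports Defs
begin

text \<open>
  Let \<open>Q\<close> be a plan for \<open>\<mu>\<close> with \<open>\<integral>E dQ < c < T \<mu>\<close>. By lower semicontinuity, \<open>T > c\<close> on a narrow
  neighbourhood of \<open>\<mu>\<close> cut out by finitely many test functions \<open>\<phi> \<in> Cb\<close>. The test integrals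
  \<open>u \<mapsto> \<integral>\<phi>(x, u x) dm\<close> are bounded and continuous for convergence in measure, hence Borel on
  \<open>L0\<close>: they are random variables under \<open>Q\<close> whose means are the integrals \<open>\<integral>\<phi> d\<mu>\<close>.
  Discretising \<open>Q\<close> on a set of nearly full measure where \<open>E\<close> is bounded yields finitely many
  \<open>u\<^sub>k\<close> and convex weights \<open>w\<^sub>k\<close> whose averages approximate these means and with
  \<open>\<Sum> w\<^sub>k E u\<^sub>k < c\<close>. The mixture \<open>\<rho> = \<Sum> w\<^sub>k \<mu>\<^bsub>u\<^sub>k\<^esub>\<close> then lies in the neighbourhood, whereas convexity and
  \<open>T \<mu>\<^bsub>u\<^esub> \<le> E u\<close> give \<open>T \<rho> \<le> \<Sum> w\<^sub>k E u\<^sub>k < c\<close>.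
\<close>

section \<open>Graphs of maps and their test integrals\<close>

lemma Cb_borel_measurable: "\<phi> \<in> Cb \<Longrightarrow> \<phi> \<in> borel_measurable borel"
  unfolding Cb_def by (auto intro: borel_measurable_continuous_onI)

lemma Cb_bounded:
  assumes "\<phi> \<in> Cb"
  obtains B where "\<And>z. \<bar>\<phi> z\<bar> \<le> B"
  using assms unfolding Cb_def bounded_iff by auto

lemma borel_measurable_fst: "fst \<in> borel_measurable borel"
  by (intro borel_measurable_continuous_onI continuous_intros)

lemma graph_measurable:
  fixes u :: "'x::second_countable_topology \<Rightarrow> 'y::{second_countable_topology, metric_space}"
  assumes "sets m = sets borel" "u \<in> L0 m"
  shows "(\<lambda>x. (x, u x)) \<in> measurable m borel"
proof -
  have "(\<lambda>x. (x, u x)) \<in> measurable m (borel \<Otimes>\<^sub>M borel)"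
    using assms by (intro measurable_Pair) (auto simp: L0_def intro: measurable_ident_sets)
  then show ?thesis by (simp add: borel_prod)
qed

lemma graph_integrand_measurable:
  fixes u :: "'x::second_countable_topology \<Rightarrow> 'y::{second_countable_topology, metric_space}"
  assumes "sets m = sets borel" "u \<in> L0 m" "\<phi> \<in> borel_measurable borel"
  shows "(\<lambda>x. \<phi> (x, u x)) \<in> borel_measurable m"
  using measurable_comp[OF graph_measurable[OF assms(1,2)] assms(3)] by (simp add: comp_def)

lemma graph_measure_in_Mpi:
  fixes u :: "'x::second_countable_topology \<Rightarrow> 'y::{second_countable_topology, metric_space}"
  assumes m: "sets m = sets borel" "finite_measure m" and u: "u \<in> L0 m"
  shows "graph_measure m u \<in> Mpi m"
proof -
  note graph = graph_measurable[OF m(1) u]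
  have "distr (graph_measure m u) borel fst = distr m borel (\<lambda>x. x)"
    unfolding graph_measure_def using graph borel_measurable_fst
    by (subst distr_distr) (auto simp: comp_def)
  also have "\<dots> = m"
    using m(1) by (intro measure_eqI) (simp_all add: emeasure_distr measurable_ident_sets)
  finally show ?thesis
    unfolding Mpi_def graph_measure_def using m graph
    by (auto intro!: finite_measure.finite_measure_distr)
qed

definition graph_integral :: "'x::topological_space measure \<Rightarrow> ('x \<times> 'y \<Rightarrow> real) \<Rightarrow> ('x \<Rightarrow> 'y) \<Rightarrow> real"
  where "graph_integral m \<phi> u = (\<integral>x. \<phi> (x, u x) \<partial>m)"

lemma integral_graph_measure:
  fixes u :: "'x::second_countable_topology \<Rightarrow> 'y::{second_countable_topology, metric_space}"
  assumes "sets m = sets borel" "u \<in> L0 m" "\<phi> \<in> borel_measurable borel"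
  shows "(\<integral>z. \<phi> z \<partial>graph_measure m u) = graph_integral m \<phi> u"
  unfolding graph_measure_def graph_integral_def using graph_measurable[OF assms(1,2)] assms(3)
  by (subst integral_distr) auto

lemma graph_integral_bounded:
  fixes u :: "'x::second_countable_topology \<Rightarrow> 'y::{second_countable_topology, metric_space}"
  assumes "sets m = sets borel" "finite_measure m" "u \<in> L0 m"
    and "\<phi> \<in> borel_measurable borel" "\<And>z. \<bar>\<phi> z\<bar> \<le> B"
  shows "\<bar>graph_integral m \<phi> u\<bar> \<le> B * measure m (space m)"
proof -
  interpret finite_measure m by fact
  have "(\<integral>x. \<bar>\<phi> (x, u x)\<bar> \<partial>m) \<le> (\<integral>x. B \<partial>m)"
    using graph_integrand_measurable[OF assms(1,3,4)] assms(5)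
    by (intro integral_mono integrable_const_bound[where B=B])
      (auto intro: order_trans[OF abs_ge_zero])
  moreover have "\<bar>\<integral>x. \<phi> (x, u x) \<partial>m\<bar> \<le> (\<integral>x. \<bar>\<phi> (x, u x)\<bar> \<partial>m)"
    by (rule integral_abs_bound)
  moreover have "(\<integral>x. B \<partial>m) = B * measure m (space m)"
    by simp
  ultimately show ?thesis
    unfolding graph_integral_def by linarith
qed

lemma AE_tendsto_if_L0_dist_less_power:
  fixes u :: "'x::topological_space \<Rightarrow> 'y::{second_countable_topology, metric_space}"
  assumes "finite_measure m" and [measurable]: "u \<in> borel_measurable m" "\<And>n. v n \<in> borel_measurable m"
    and dist_v: "\<And>n. L0_dist m u (v n) < (1/4)^n"
  shows "AE x in m. (\<lambda>n. v n x) \<longlonglongrightarrow> u x"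
proof -
  interpret finite_measure m by fact
  define g where "g n x = min 1 (dist (u x) (v n x))" for n x
  define A where "A n = {x\<in>space m. (1/2)^n \<le> g n x}" for n
  have [measurable]: "g n \<in> borel_measurable m" for n
    unfolding g_def by measurable
  have A_sets [measurable]: "A n \<in> sets m" for n
    unfolding A_def by measurable
  have measure_A: "measure m (A n) \<le> (1/2)^n" for n
  proof -
    have "measure m (A n) \<le> (\<integral>x. g n x \<partial>m) / (1/2)^n"
      unfolding A_def
      by (rule integral_Markov_inequality_measure) (auto simp: g_def intro: integrable_const_bound[where B=1])
    also have "\<dots> \<le> (1/4)^n / (1/2)^n"
      using dist_v[of n] by (intro divide_right_mono) (auto simp: L0_dist_def g_def)
    also have "\<dots> = (1/2)^n"
      by (simp add: divide_simps flip: power_mult_distrib)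
    finally show ?thesis .
  qed
  have "summable (\<lambda>n. measure m (A n))"
    by (rule summable_comparison_test'[OF summable_geometric[of "1/2"]]) (use measure_A in auto)
  then have "AE x in m. eventually (\<lambda>n. x \<in> space m - A n) sequentially"
    by (intro borel_cantelli_AE1) (auto simp: emeasure_eq_measure)
  then show ?thesis
  proof eventually_elim
    case (elim x)
    have "eventually (\<lambda>n. dist (v n x) (u x) \<le> (1/2)^n) sequentially"
      using elim
    proof (rule eventually_mono)
      fix n assume "x \<in> space m - A n"
      moreover have "(1/2::real)^n \<le> 1"
        by (rule power_le_one) auto
      ultimately show "dist (v n x) (u x) \<le> (1/2)^n"
        by (auto simp: A_def g_def dist_commute min_def split: if_splits)
    qed
    then have "(\<lambda>n. dist (v n x) (u x)) \<longlonglongrightarrow> 0"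
      by (intro tendsto_sandwich[OF _ _ tendsto_const LIMSEQ_realpow_zero]) auto
    then show ?case
      by (rule tendsto_dist_iff[THEN iffD2])
  qed
qed

lemma graph_integral_continuous:
  fixes u :: "'x::second_countable_topology \<Rightarrow> 'y::{second_countable_topology, metric_space}"
  assumes m: "sets m = sets borel" "finite_measure m" and \<phi>: "\<phi> \<in> Cb"
    and u: "u \<in> L0 m" and "\<epsilon> > 0"
  shows "\<exists>r>0. \<forall>v\<in>L0 m. L0_dist m u v < r \<longrightarrow> \<bar>graph_integral m \<phi> v - graph_integral m \<phi> u\<bar> < \<epsilon>"
proof (rule ccontr)
  assume "\<not> ?thesis"
  then have "\<forall>n::nat. \<exists>v. v \<in> L0 m \<and> L0_dist m u v < (1/4)^n \<and>
      \<epsilon> \<le> \<bar>graph_integral m \<phi> v - graph_integral m \<phi> u\<bar>"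
    by (metis not_le zero_less_divide_1_iff zero_less_numeral zero_less_power)
  then obtain v where v: "\<And>n. v n \<in> L0 m" "\<And>n. L0_dist m u (v n) < (1/4)^n"
    "\<And>n. \<epsilon> \<le> \<bar>graph_integral m \<phi> (v n) - graph_integral m \<phi> u\<bar>"
    by metis
  obtain B where B: "\<And>z. \<bar>\<phi> z\<bar> \<le> B"
    using Cb_bounded[OF \<phi>] by blast
  have [measurable]: "\<phi> \<in> borel_measurable borel"
    using Cb_borel_measurable[OF \<phi>] .
  have "AE x in m. (\<lambda>n. v n x) \<longlonglongrightarrow> u x"
    using u v(1,2) m(2) by (intro AE_tendsto_if_L0_dist_less_power) (auto simp: L0_def)
  then have lim: "AE x in m. (\<lambda>n. \<phi> (x, v n x)) \<longlonglongrightarrow> \<phi> (x, u x)"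
  proof eventually_elim
    case (elim x)
    then show ?case
      using \<phi> unfolding Cb_def
      by (intro continuous_on_tendsto_compose[where f=\<phi> and s=UNIV]) (auto intro: tendsto_intros)
  qed
  have "(\<lambda>n. graph_integral m \<phi> (v n)) \<longlonglongrightarrow> graph_integral m \<phi> u"
    unfolding graph_integral_def
  proof (rule integral_dominated_convergence[where w="\<lambda>_. B"])
    show "(\<lambda>x. \<phi> (x, u x)) \<in> borel_measurable m" "(\<lambda>x. \<phi> (x, v n x)) \<in> borel_measurable m" for n
      using u v(1) by (auto intro: graph_integrand_measurable[OF m(1)])
  qed (use lim B m(2) finite_measure.integrable_const in auto)
  from LIMSEQ_D[OF this \<open>\<epsilon> > 0\<close>] obtain n
    where "\<bar>graph_integral m \<phi> (v n) - graph_integral m \<phi> u\<bar> < \<epsilon>"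
    by auto
  with v(3)[of n] show False
    by simp
qed

lemma L0_borel_space: "space (L0_borel m) = L0 m"
  unfolding L0_borel_def by (simp add: space_measure_of_conv)

lemma L0_open_in_sets: "L0_open m U \<Longrightarrow> U \<in> sets (L0_borel m)"
  unfolding L0_borel_def by (subst sets_measure_of) (auto simp: L0_open_def)

lemma graph_integral_borel_measurable:
  fixes m :: "'x::second_countable_topology measure"
  assumes m: "sets m = sets borel" "finite_measure m" and \<phi>: "\<phi> \<in> Cb"
  shows "(graph_integral m \<phi> :: ('x \<Rightarrow> 'y::{second_countable_topology, metric_space}) \<Rightarrow> real)
    \<in> borel_measurable (L0_borel m)"
proof (rule borel_measurableI)
  fix S :: "real set" assume "open S"
  have "L0_open m (graph_integral m \<phi> -` S \<inter> L0 m)"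
    unfolding L0_open_def
  proof (intro conjI ballI)
    fix u :: "'x \<Rightarrow> 'y" assume u: "u \<in> graph_integral m \<phi> -` S \<inter> L0 m"
    then obtain e where e: "e > 0" "ball (graph_integral m \<phi> u) e \<subseteq> S"
      using \<open>open S\<close> by (auto simp: open_contains_ball)
    then obtain r where "r > 0"
      "\<forall>v\<in>L0 m. L0_dist m u v < r \<longrightarrow> \<bar>graph_integral m \<phi> v - graph_integral m \<phi> u\<bar> < e"
      using graph_integral_continuous[OF m \<phi>, of u e] u by auto
    with e show "\<exists>r>0. \<forall>v\<in>L0 m. L0_dist m u v < r \<longrightarrow> v \<in> graph_integral m \<phi> -` S \<inter> L0 m"
      by (auto simp: dist_real_def subset_iff abs_minus_commute)
  qed auto
  then show "graph_integral m \<phi> -` S \<inter> space (L0_borel m) \<in> sets (L0_borel m)"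
    by (simp add: L0_borel_space L0_open_in_sets)
qed

section \<open>Mixtures of measures\<close>

lemma sets_mix [simp, measurable_cong]: "sets (mix t \<mu> \<nu>) = sets borel"
  unfolding mix_def using sets.sigma_sets_eq[of borel] by (simp add: sets_measure_of_conv)

lemma space_mix [simp]: "space (mix t \<mu> \<nu>) = UNIV"
  unfolding mix_def by (simp add: space_measure_of_conv)

lemma emeasure_mix:
  assumes "sets \<mu> = sets borel" "sets \<nu> = sets borel" "A \<in> sets borel"
  shows "emeasure (mix t \<mu> \<nu>) A = ennreal t * emeasure \<mu> A + ennreal (1 - t) * emeasure \<nu> A"
  unfolding mix_def
proof (rule emeasure_measure_of_sigma)
  show "sigma_algebra UNIV (sets borel)"
    using sets.sigma_algebra_axioms[of borel] by simp
  show "positive (sets borel) (\<lambda>A. ennreal t * emeasure \<mu> A + ennreal (1 - t) * emeasure \<nu> A)"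
    unfolding positive_def by simp
  show "countably_additive (sets borel) (\<lambda>A. ennreal t * emeasure \<mu> A + ennreal (1 - t) * emeasure \<nu> A)"
    unfolding countably_additive_def
  proof (intro allI impI)
    fix F :: "nat \<Rightarrow> 'a set" assume "range F \<subseteq> sets borel" "disjoint_family F"
    with assms(1,2) show "(\<Sum>i. ennreal t * emeasure \<mu> (F i) + ennreal (1 - t) * emeasure \<nu> (F i))
        = ennreal t * emeasure \<mu> (\<Union>(range F)) + ennreal (1 - t) * emeasure \<nu> (\<Union>(range F))"
      by (simp add: suminf_add[symmetric] suminf_emeasure)
  qed
qed fact

lemma nn_integral_mix:
  fixes f :: "'a::topological_space \<Rightarrow> ennreal"
  assumes \<mu>: "sets \<mu> = sets borel" and \<nu>: "sets \<nu> = sets borel" and "f \<in> borel_measurable borel"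
  shows "(\<integral>\<^sup>+x. f x \<partial>mix t \<mu> \<nu>) = ennreal t * (\<integral>\<^sup>+x. f x \<partial>\<mu>) + ennreal (1 - t) * (\<integral>\<^sup>+x. f x \<partial>\<nu>)"
  using \<open>f \<in> borel_measurable borel\<close>
proof (induction rule: borel_measurable_induct)
  case (cong f g)
  then have "f = g" by auto
  with cong show ?case by simp
next
  case (set A)
  then show ?case
    using \<mu> \<nu> by (simp add: emeasure_mix)
next
  case (mult u c)
  then have [measurable]: "u \<in> borel_measurable \<mu>" "u \<in> borel_measurable \<nu>"
    by (auto simp: measurable_cong_sets[OF \<mu> refl] measurable_cong_sets[OF \<nu> refl])
  from mult show ?case
    by (simp add: nn_integral_cmult distrib_left mult.left_commute)
next
  case (add u v)
  then have [measurable]: "u \<in> borel_measurable \<mu>" "u \<in> borel_measurable \<nu>"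
    "v \<in> borel_measurable \<mu>" "v \<in> borel_measurable \<nu>"
    by (auto simp: measurable_cong_sets[OF \<mu> refl] measurable_cong_sets[OF \<nu> refl])
  from add show ?case
    by (simp add: nn_integral_add distrib_left add_ac)
next
  case (seq U)
  have U: "incseq U" "\<And>i. U i \<in> borel_measurable borel"
    "\<And>i. (\<integral>\<^sup>+x. U i x \<partial>mix t \<mu> \<nu>) = ennreal t * (\<integral>\<^sup>+x. U i x \<partial>\<mu>) + ennreal (1 - t) * (\<integral>\<^sup>+x. U i x \<partial>\<nu>)"
    using seq by blast+
  have SUP_integral: "(\<integral>\<^sup>+x. (SUP i. U i) x \<partial>M) = (SUP i. \<integral>\<^sup>+x. U i x \<partial>M)"
    if "sets M = sets borel" for M
    unfolding SUP_apply using U(1,2) that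
    by (intro nn_integral_monotone_convergence_SUP) (simp_all add: measurable_cong_sets[OF that refl])
  have incseq_integral: "incseq (\<lambda>i. c * (\<integral>\<^sup>+x. U i x \<partial>M))" for M and c :: ennreal
    using U(1) by (auto simp: incseq_def le_fun_def intro!: mult_left_mono nn_integral_mono)
  have "(\<integral>\<^sup>+x. (SUP i. U i) x \<partial>mix t \<mu> \<nu>)
      = (SUP i. ennreal t * (\<integral>\<^sup>+x. U i x \<partial>\<mu>) + ennreal (1 - t) * (\<integral>\<^sup>+x. U i x \<partial>\<nu>))"
    using U(3) by (simp only: SUP_integral[OF sets_mix])
  also have "\<dots> = ennreal t * (SUP i. \<integral>\<^sup>+x. U i x \<partial>\<mu>) + ennreal (1 - t) * (SUP i. \<integral>\<^sup>+x. U i x \<partial>\<nu>)"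
    by (simp add: ennreal_SUP_add[OF incseq_integral incseq_integral] SUP_mult_left_ennreal)
  finally show ?case
    by (simp only: SUP_integral[OF \<mu>] SUP_integral[OF \<nu>])
qed

lemma finite_measure_mix:
  assumes "sets \<mu> = sets borel" "sets \<nu> = sets borel" "finite_measure \<mu>" "finite_measure \<nu>"
  shows "finite_measure (mix t \<mu> \<nu>)"
proof (rule finite_measureI)
  have "emeasure \<mu> UNIV \<noteq> \<infinity>" "emeasure \<nu> UNIV \<noteq> \<infinity>"
    using assms finite_measure.emeasure_finite sets_eq_imp_space_eq by fastforce+
  then show "emeasure (mix t \<mu> \<nu>) (space (mix t \<mu> \<nu>)) \<noteq> \<infinity>"
    using assms by (simp add: emeasure_mix ennreal_mult_eq_top_iff)
qed

lemma integral_mix: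
  fixes g :: "'a::topological_space \<Rightarrow> real"
  assumes \<mu>: "sets \<mu> = sets borel" "finite_measure \<mu>" and \<nu>: "sets \<nu> = sets borel" "finite_measure \<nu>"
    and g: "g \<in> borel_measurable borel" "\<And>x. \<bar>g x\<bar> \<le> B" and t: "0 \<le> t" "t \<le> 1"
  shows "(\<integral>x. g x \<partial>mix t \<mu> \<nu>) = t * (\<integral>x. g x \<partial>\<mu>) + (1 - t) * (\<integral>x. g x \<partial>\<nu>)"
proof -
  have integrable: "integrable M g" if "sets M = sets borel" "finite_measure M" for M
    using that g by (intro finite_measure.integrable_const_bound[where B=B]) (auto simp: measurable_cong_sets[OF that(1) refl])
  have finite: "(\<integral>\<^sup>+x. ennreal (g x) \<partial>M) < \<top>" "(\<integral>\<^sup>+x. ennreal (- g x) \<partial>M) < \<top>"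
    if "sets M = sets borel" "finite_measure M" for M
    using integrable[OF that] by (simp_all add: real_integrable_def top.not_eq_extremum)
  have [measurable]: "(\<lambda>x. ennreal (g x)) \<in> borel_measurable borel" "(\<lambda>x. ennreal (- g x)) \<in> borel_measurable borel"
    using g(1) by measurable
  have nonneg: "0 \<le> t" "0 \<le> 1 - t"
    using t by simp_all
  have enn2real_mix: "enn2real (\<integral>\<^sup>+x. h x \<partial>mix t \<mu> \<nu>)
      = t * enn2real (\<integral>\<^sup>+x. h x \<partial>\<mu>) + (1 - t) * enn2real (\<integral>\<^sup>+x. h x \<partial>\<nu>)"
    if "h \<in> borel_measurable borel" "(\<integral>\<^sup>+x. h x \<partial>\<mu>) < \<top>" "(\<integral>\<^sup>+x. h x \<partial>\<nu>) < \<top>" for h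
    using that nonneg
    by (simp add: nn_integral_mix \<mu>(1) \<nu>(1) enn2real_plus enn2real_mult ennreal_mult_less_top)
  have "(\<integral>x. g x \<partial>mix t \<mu> \<nu>) = enn2real (\<integral>\<^sup>+x. ennreal (g x) \<partial>mix t \<mu> \<nu>)
      - enn2real (\<integral>\<^sup>+x. ennreal (- g x) \<partial>mix t \<mu> \<nu>)"
    by (intro real_lebesgue_integral_def integrable finite_measure_mix \<mu> \<nu> sets_mix)
  also have "\<dots> = t * (enn2real (\<integral>\<^sup>+x. ennreal (g x) \<partial>\<mu>) - enn2real (\<integral>\<^sup>+x. ennreal (- g x) \<partial>\<mu>))
      + (1 - t) * (enn2real (\<integral>\<^sup>+x. ennreal (g x) \<partial>\<nu>) - enn2real (\<integral>\<^sup>+x. ennreal (- g x) \<partial>\<nu>))"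
    using finite[OF \<mu>] finite[OF \<nu>] by (simp only: enn2real_mix measurable) (simp add: algebra_simps)
  also have "\<dots> = t * (\<integral>x. g x \<partial>\<mu>) + (1 - t) * (\<integral>x. g x \<partial>\<nu>)"
    using integrable[OF \<mu>] integrable[OF \<nu>] by (simp add: real_lebesgue_integral_def)
  finally show ?thesis .
qed

lemma mix_in_Mpi:
  assumes \<mu>: "\<mu> \<in> Mpi m" and \<nu>: "\<nu> \<in> Mpi m" and t: "0 \<le> t" "t \<le> 1"
  shows "mix t \<mu> \<nu> \<in> Mpi m"
proof -
  have sets: "sets \<mu> = sets borel" "sets \<nu> = sets borel" and "finite_measure \<mu>" "finite_measure \<nu>"
    and marginal: "distr \<mu> borel fst = m" "distr \<nu> borel fst = m"
    using \<mu> \<nu> by (auto simp: Mpi_def)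
  have "distr (mix t \<mu> \<nu>) borel fst = m"
  proof (rule measure_eqI)
    fix A assume "A \<in> sets (distr (mix t \<mu> \<nu>) borel fst)"
    then have A: "A \<in> sets borel" by simp
    have fst_A: "fst -` A \<in> sets borel"
      using measurable_sets[OF borel_measurable_fst A] by simp
    have emeasure_distr_fst: "emeasure (distr M borel fst) A = emeasure M (fst -` A)"
      if "sets M = sets borel" for M
    proof -
      have "fst \<in> borel_measurable M"
        using borel_measurable_fst by (simp add: measurable_cong_sets[OF that refl])
      then show ?thesis
        using A by (simp add: emeasure_distr sets_eq_imp_space_eq[OF that])
    qed
    have "emeasure (mix t \<mu> \<nu>) (fst -` A) = (ennreal t + ennreal (1 - t)) * emeasure m A"
      unfolding emeasure_mix[OF sets fst_A] distrib_right
      using emeasure_distr_fst[OF sets(1)] emeasure_distr_fst[OF sets(2)] marginal by simp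
    also have "ennreal t + ennreal (1 - t) = 1"
      using t by (simp flip: ennreal_plus)
    finally show "emeasure (distr (mix t \<mu> \<nu>) borel fst) A = emeasure m A"
      by (simp add: emeasure_distr_fst)
  qed (use marginal in auto)
  then show ?thesis
    unfolding Mpi_def using finite_measure_mix sets \<open>finite_measure \<mu>\<close> \<open>finite_measure \<nu>\<close> by auto
qed

section \<open>Convexity and lower semicontinuity\<close>

lemma convex_fun_on_Mpi_combination:
  assumes conv: "convex_fun_on_Mpi m T" and "finite J"
    and "\<forall>j\<in>J. \<nu> j \<in> Mpi m" "\<forall>j\<in>J. 0 \<le> w j" "sum w J = 1"
  obtains \<rho> where "\<rho> \<in> Mpi m" "T \<rho> \<le> (\<Sum>j\<in>J. ennreal (w j) * T (\<nu> j))"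
    "\<And>\<phi>. \<phi> \<in> Cb \<Longrightarrow> (\<integral>z. \<phi> z \<partial>\<rho>) = (\<Sum>j\<in>J. w j * (\<integral>z. \<phi> z \<partial>\<nu> j))"
proof -
  have "\<exists>\<rho>\<in>Mpi m. T \<rho> \<le> (\<Sum>j\<in>J. ennreal (w j) * T (\<nu> j)) \<and>
      (\<forall>\<phi>\<in>Cb. (\<integral>z. \<phi> z \<partial>\<rho>) = (\<Sum>j\<in>J. w j * (\<integral>z. \<phi> z \<partial>\<nu> j)))"
    using assms(2-)
  proof (induction J arbitrary: w rule: finite_induct)
    case empty
    then show ?case by simp
  next
    case (insert j J)
    then have \<nu>_j: "\<nu> j \<in> Mpi m" and w_j: "0 \<le> w j" "w j \<le> 1" and w_J: "\<forall>k\<in>J. 0 \<le> w k"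
      and sum_J: "sum w J = 1 - w j"
      using sum_nonneg[of J w] by auto
    show ?case
    proof (cases "w j = 1")
      case True
      then have "\<forall>k\<in>J. w k = 0"
        using sum_J w_J insert(1) by (simp add: sum_nonneg_eq_0_iff)
      with True show ?thesis
        using insert(1,2) \<nu>_j by (intro bexI[of _ "\<nu> j"]) simp_all
    next
      case False
      define s where "s = 1 - w j"
      have "s > 0"
        using w_j False by (simp add: s_def)
      obtain \<rho> where \<rho>: "\<rho> \<in> Mpi m" "T \<rho> \<le> (\<Sum>k\<in>J. ennreal (w k / s) * T (\<nu> k))"
        "\<And>\<phi>. \<phi> \<in> Cb \<Longrightarrow> (\<integral>z. \<phi> z \<partial>\<rho>) = (\<Sum>k\<in>J. w k / s * (\<integral>z. \<phi> z \<partial>\<nu> k))"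
        using insert.IH[of "\<lambda>k. w k / s"] insert.prems \<open>s > 0\<close> w_J sum_J
        by (auto simp: s_def simp flip: sum_divide_distrib)
      show ?thesis
      proof (intro bexI[of _ "mix (w j) (\<nu> j) \<rho>"] conjI ballI)
        show "mix (w j) (\<nu> j) \<rho> \<in> Mpi m"
          by (rule mix_in_Mpi[OF \<nu>_j \<rho>(1) w_j])
        have "T (mix (w j) (\<nu> j) \<rho>) \<le> ennreal (w j) * T (\<nu> j) + ennreal s * T \<rho>"
          using conv \<nu>_j \<rho>(1) w_j unfolding convex_fun_on_Mpi_def s_def by auto
        also have "\<dots> \<le> ennreal (w j) * T (\<nu> j) + (\<Sum>k\<in>J. ennreal s * (ennreal (w k / s) * T (\<nu> k)))"
          using \<rho>(2) by (intro add_left_mono) (simp add: mult_left_mono flip: sum_distrib_left)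
        also have "(\<Sum>k\<in>J. ennreal s * (ennreal (w k / s) * T (\<nu> k))) = (\<Sum>k\<in>J. ennreal (w k) * T (\<nu> k))"
          using \<open>s > 0\<close> w_J by (intro sum.cong) (simp_all add: mult.assoc[symmetric] flip: ennreal_mult)
        finally show "T (mix (w j) (\<nu> j) \<rho>) \<le> (\<Sum>k\<in>insert j J. ennreal (w k) * T (\<nu> k))"
          using insert(1,2) by simp
      next
        fix \<phi> :: "'a \<times> 'b \<Rightarrow> real" assume "\<phi> \<in> Cb"
        then obtain B where "\<And>z. \<bar>\<phi> z\<bar> \<le> B"
          using Cb_bounded by blast
        then have "(\<integral>z. \<phi> z \<partial>mix (w j) (\<nu> j) \<rho>) = w j * (\<integral>z. \<phi> z \<partial>\<nu> j) + s * (\<integral>z. \<phi> z \<partial>\<rho>)"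
          unfolding s_def using \<nu>_j \<rho>(1) w_j Cb_borel_measurable[OF \<open>\<phi> \<in> Cb\<close>]
          by (intro integral_mix[where B=B]) (auto simp: Mpi_def)
        also have "s * (\<integral>z. \<phi> z \<partial>\<rho>) = (\<Sum>k\<in>J. w k * (\<integral>z. \<phi> z \<partial>\<nu> k))"
          using \<rho>(3)[OF \<open>\<phi> \<in> Cb\<close>] \<open>s > 0\<close> by (simp add: sum_distrib_left)
        finally show "(\<integral>z. \<phi> z \<partial>mix (w j) (\<nu> j) \<rho>) = (\<Sum>k\<in>insert j J. w k * (\<integral>z. \<phi> z \<partial>\<nu> k))"
          using insert(1,2) by simp
      qed
    qed
  qed
  then show ?thesis
    using that by blast
qed

lemma generate_topology_on_finite_subbasic_nbhd:
  assumes "generate_topology_on S U" "x \<in> U"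
  shows "\<exists>F. finite F \<and> F \<subseteq> S \<and> x \<in> \<Inter>F \<and> \<Union>S \<inter> \<Inter>F \<subseteq> U"
  using assms
proof (induction arbitrary: x rule: generate_topology_on.induct)
  case (Int a b)
  then have "x \<in> a" "x \<in> b"
    by auto
  obtain F where "finite F" "F \<subseteq> S" "x \<in> \<Inter>F" "\<Union>S \<inter> \<Inter>F \<subseteq> a"
    using Int.IH(1)[OF \<open>x \<in> a\<close>] by blast
  moreover obtain G where "finite G" "G \<subseteq> S" "x \<in> \<Inter>G" "\<Union>S \<inter> \<Inter>G \<subseteq> b"
    using Int.IH(2)[OF \<open>x \<in> b\<close>] by blast
  moreover have "\<Inter>(F \<union> G) = \<Inter>F \<inter> \<Inter>G"
    by (rule Inter_Un_distrib)
  ultimately show ?case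
    by (intro exI[of _ "F \<union> G"]) blast
next
  case (UN K)
  then obtain k where "k \<in> K" "x \<in> k"
    by auto
  then obtain F where "finite F" "F \<subseteq> S" "x \<in> \<Inter>F" "\<Union>S \<inter> \<Inter>F \<subseteq> k"
    using UN.IH[OF \<open>k \<in> K\<close> \<open>x \<in> k\<close>] by blast
  moreover have "k \<subseteq> \<Union>K"
    using \<open>k \<in> K\<close> by blast
  ultimately show ?case
    by (intro exI[of _ F]) blast
next
  case (Basis s)
  then show ?case
    by (intro exI[of _ "{s}"]) simp
qed simp

lemma lsc_narrow_nbhd:
  fixes T :: "('x::topological_space \<times> 'y::topological_space) measure \<Rightarrow> ennreal"
  assumes lsc: "lsc_narrow m T" and \<mu>: "\<mu> \<in> Mpi m" and "c < T \<mu>"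
  obtains \<Phi> \<delta> where "finite \<Phi>" "\<Phi> \<subseteq> Cb" "\<delta> > 0"
    "\<And>\<nu>. \<nu> \<in> Mpi m \<Longrightarrow> (\<forall>\<phi>\<in>\<Phi>. \<bar>(\<integral>z. \<phi> z \<partial>\<nu>) - (\<integral>z. \<phi> z \<partial>\<mu>)\<bar> < \<delta>) \<Longrightarrow> c < T \<nu>"
proof -
  define S where "S = {{\<mu> \<in> Mpi m. (\<integral>z. \<phi> z \<partial>\<mu>) \<in> U} | (\<phi> :: 'x \<times> 'y \<Rightarrow> real) U. \<phi> \<in> Cb \<and> open U}"
  have "openin (narrow_top m) {\<mu> \<in> Mpi m. c < T \<mu>}"
    using lsc unfolding lsc_narrow_def by blast
  then have "generate_topology_on S {\<mu> \<in> Mpi m. c < T \<mu>}"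
    unfolding narrow_top_def S_def by (rule openin_topology_generated_by)
  moreover have "\<mu> \<in> {\<mu> \<in> Mpi m. c < T \<mu>}"
    using \<mu> \<open>c < T \<mu>\<close> by simp
  ultimately obtain F where F: "finite F" "F \<subseteq> S" "\<mu> \<in> \<Inter>F" "\<Union>S \<inter> \<Inter>F \<subseteq> {\<mu> \<in> Mpi m. c < T \<mu>}"
    using generate_topology_on_finite_subbasic_nbhd by meson
  have "{\<nu> \<in> Mpi m. (\<integral>z. 0 \<partial>\<nu>) \<in> UNIV} \<in> S"
    unfolding S_def mem_Collect_eq
    by (intro exI[of _ "\<lambda>_. 0"] exI[of _ UNIV]) (simp add: Cb_def)
  then have Mpi_S: "Mpi m \<subseteq> \<Union>S"
    by blast
  have "\<forall>A\<in>F. \<exists>\<phi>e. fst \<phi>e \<in> Cb \<and> snd \<phi>e > 0 \<and>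
      (\<forall>\<nu>\<in>Mpi m. \<bar>(\<integral>z. fst \<phi>e z \<partial>\<nu>) - (\<integral>z. fst \<phi>e z \<partial>\<mu>)\<bar> < snd \<phi>e \<longrightarrow> \<nu> \<in> A)"
  proof
    fix A assume "A \<in> F"
    then obtain \<phi> U where "\<phi> \<in> Cb" "open U" and A: "A = {\<mu> \<in> Mpi m. (\<integral>z. \<phi> z \<partial>\<mu>) \<in> U}"
      using F(2) unfolding S_def by blast
    moreover have "(\<integral>z. \<phi> z \<partial>\<mu>) \<in> U"
      using F(3) \<open>A \<in> F\<close> A by blast
    then obtain e where "e > 0" "ball (\<integral>z. \<phi> z \<partial>\<mu>) e \<subseteq> U"
      using \<open>open U\<close> open_contains_ball by blast
    ultimately show "\<exists>\<phi>e. fst \<phi>e \<in> Cb \<and> snd \<phi>e > 0 \<and>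
      (\<forall>\<nu>\<in>Mpi m. \<bar>(\<integral>z. fst \<phi>e z \<partial>\<nu>) - (\<integral>z. fst \<phi>e z \<partial>\<mu>)\<bar> < snd \<phi>e \<longrightarrow> \<nu> \<in> A)"
      by (intro exI[of _ "(\<phi>, e)"]) (auto simp: dist_real_def abs_minus_commute subset_iff)
  qed
  from bchoice[OF this] obtain \<phi>e where \<phi>e: "\<forall>A\<in>F. fst (\<phi>e A) \<in> Cb \<and> snd (\<phi>e A) > 0 \<and>
      (\<forall>\<nu>\<in>Mpi m. \<bar>(\<integral>z. fst (\<phi>e A) z \<partial>\<nu>) - (\<integral>z. fst (\<phi>e A) z \<partial>\<mu>)\<bar> < snd (\<phi>e A) \<longrightarrow> \<nu> \<in> A)"
    by blast
  define \<delta> where "\<delta> = Min (insert 1 ((\<lambda>A. snd (\<phi>e A)) ` F))"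
  show ?thesis
  proof
    show "finite ((\<lambda>A. fst (\<phi>e A)) ` F)" "(\<lambda>A. fst (\<phi>e A)) ` F \<subseteq> Cb"
      using F(1) \<phi>e by auto
    show "\<delta> > 0"
      using F(1) \<phi>e by (simp add: \<delta>_def)
    fix \<nu> assume "\<nu> \<in> Mpi m"
      and close: "\<forall>\<phi>\<in>(\<lambda>A. fst (\<phi>e A)) ` F. \<bar>(\<integral>z. \<phi> z \<partial>\<nu>) - (\<integral>z. \<phi> z \<partial>\<mu>)\<bar> < \<delta>"
    have "\<nu> \<in> A" if "A \<in> F" for A
    proof -
      have "\<delta> \<le> snd (\<phi>e A)"
        using F(1) that by (simp add: \<delta>_def)
      then show ?thesis
        using close \<phi>e \<open>\<nu> \<in> Mpi m\<close> that by force
    qed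
    then show "c < T \<nu>"
      using F(4) Mpi_S \<open>\<nu> \<in> Mpi m\<close> by blast
  qed
qed

section \<open>Finitely supported approximation of probability measures\<close>

lemma abs_diff_less_if_floor_divide_eq:
  fixes a b d :: real
  assumes "d > 0" "\<lfloor>a / d\<rfloor> = \<lfloor>b / d\<rfloor>"
  shows "\<bar>a - b\<bar> < d"
proof -
  have "\<bar>a / d - b / d\<bar> < 1"
    using assms(2) floor_correct[of "a / d"] floor_correct[of "b / d"] by linarith
  then show ?thesis
    using assms(1) by (simp add: abs_less_iff field_simps)
qed

lemma finite_image_floor_divide:
  fixes g :: "'a \<Rightarrow> real"
  assumes "d > 0" "\<And>x. x \<in> D \<Longrightarrow> \<bar>g x\<bar> \<le> B"
  shows "finite ((\<lambda>x. \<lfloor>g x / d\<rfloor>) ` D)"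
proof (rule finite_subset)
  have "- B / d \<le> g x / d" "g x / d \<le> B / d" if "x \<in> D" for x
    using assms(2)[OF that] assms(1) divide_right_mono[of "- B" "g x" d] divide_right_mono[of "g x" B d]
    by (simp_all add: abs_le_iff)
  then show "(\<lambda>x. \<lfloor>g x / d\<rfloor>) ` D \<subseteq> {\<lfloor>- B / d\<rfloor>..\<lfloor>B / d\<rfloor>}"
    by (auto intro!: floor_mono)
qed simp

lemma finite_image_restrict_floor_divide:
  fixes Fs :: "('a \<Rightarrow> real) set"
  assumes "finite Fs" "d > 0" "\<And>g. g \<in> Fs \<Longrightarrow> \<exists>B. \<forall>x\<in>D. \<bar>g x\<bar> \<le> B"
  shows "finite ((\<lambda>x. \<lambda>g\<in>Fs. \<lfloor>g x / d\<rfloor>) ` D)"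
proof (rule finite_subset)
  show "(\<lambda>x. \<lambda>g\<in>Fs. \<lfloor>g x / d\<rfloor>) ` D \<subseteq> Pi\<^sub>E Fs (\<lambda>g. (\<lambda>x. \<lfloor>g x / d\<rfloor>) ` D)"
  proof
    fix k assume "k \<in> (\<lambda>x. \<lambda>g\<in>Fs. \<lfloor>g x / d\<rfloor>) ` D"
    then obtain y where "y \<in> D" "k = (\<lambda>g\<in>Fs. \<lfloor>g y / d\<rfloor>)"
      by blast
    then show "k \<in> Pi\<^sub>E Fs (\<lambda>g. (\<lambda>x. \<lfloor>g x / d\<rfloor>) ` D)"
      unfolding \<open>k = (\<lambda>g\<in>Fs. \<lfloor>g y / d\<rfloor>)\<close> restrict_PiE_iff by blast
  qed
  have "finite ((\<lambda>x. \<lfloor>g x / d\<rfloor>) ` D)" if "g \<in> Fs" for g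
  proof -
    obtain B where "\<forall>x\<in>D. \<bar>g x\<bar> \<le> B"
      using assms(3)[OF \<open>g \<in> Fs\<close>] by blast
    then show ?thesis
      by (intro finite_image_floor_divide[OF \<open>d > 0\<close>]) auto
  qed
  then show "finite (Pi\<^sub>E Fs (\<lambda>g. (\<lambda>x. \<lfloor>g x / d\<rfloor>) ` D))"
    using \<open>finite Fs\<close> by (intro finite_PiE) auto
qed

lemma restrict_eq_restrict_iff: "restrict f A = restrict g A \<longleftrightarrow> (\<forall>x\<in>A. f x = g x)"
proof
  assume eq: "restrict f A = restrict g A"
  show "\<forall>x\<in>A. f x = g x"
  proof
    fix x assume "x \<in> A"
    with fun_cong[OF eq, of x] show "f x = g x"
      by simp
  qed
next
  assume "\<forall>x\<in>A. f x = g x"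
  then show "restrict f A = restrict g A"
    by (intro restrict_ext) blast
qed

lemma (in finite_measure) abs_set_integral_diff_const_le:
  fixes g :: "'a \<Rightarrow> real"
  assumes "A \<in> sets M" "set_integrable M A g" "\<And>x. x \<in> A \<Longrightarrow> \<bar>g x - c\<bar> \<le> d"
  shows "\<bar>(LINT x:A|M. g x) - measure M A * c\<bar> \<le> d * measure M A"
proof -
  have "integrable M (indicat_real A)"
    using assms(1) by (simp add: integrable_indicator_iff sets.Int_space_eq2 less_top[symmetric])
  then have const: "set_integrable M A (\<lambda>_. a)" "(LINT x:A|M. a) = measure M A * a" for a :: real
    using assms(1) by (simp_all add: set_integrable_def set_integral_const)
  have "(LINT x:A|M. g x) - measure M A * c = (LINT x:A|M. g x - c)"
    using assms(2) const by simp
  also have "\<bar>\<dots>\<bar> \<le> (LINT x:A|M. \<bar>g x - c\<bar>)"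
    using set_integral_norm_bound[of M A "\<lambda>x. g x - c"] assms(2) const by simp
  also have "\<dots> \<le> (LINT x:A|M. d)"
    using assms(2,3) const by (intro set_integral_mono set_integrable_abs) auto
  finally show ?thesis
    using const by (simp add: mult.commute)
qed

lemma (in finite_measure) set_integral_Riemann_sum_approx:
  fixes g :: "'a \<Rightarrow> real"
  assumes "finite K" "disjoint_family_on L K" "\<And>k. k \<in> K \<Longrightarrow> L k \<in> sets M"
    and "\<And>k. k \<in> K \<Longrightarrow> set_integrable M (L k) g"
    and "\<And>k x. k \<in> K \<Longrightarrow> x \<in> L k \<Longrightarrow> \<bar>g x - c k\<bar> \<le> d"
  shows "\<bar>(LINT x:(\<Union>k\<in>K. L k)|M. g x) - (\<Sum>k\<in>K. measure M (L k) * c k)\<bar> \<le> d * measure M (\<Union>k\<in>K. L k)"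
proof -
  have "AE x in M. x \<in> L i \<and> x \<in> L j \<longrightarrow> i = j" if "i \<in> K" "j \<in> K" for i j
    by (intro AE_I2) (use assms(2) that in \<open>auto simp: disjoint_family_on_def\<close>)
  then have "(LINT x:(\<Union>k\<in>K. L k)|M. g x) = (\<Sum>k\<in>K. LINT x:L k|M. g x)"
    using assms(1,3,4) by (intro set_integral_finite_UN_AE) auto
  then have "\<bar>(LINT x:(\<Union>k\<in>K. L k)|M. g x) - (\<Sum>k\<in>K. measure M (L k) * c k)\<bar>
      \<le> (\<Sum>k\<in>K. \<bar>(LINT x:L k|M. g x) - measure M (L k) * c k\<bar>)"
    by (simp add: sum_subtractf[symmetric] sum_abs)
  also have "\<dots> \<le> (\<Sum>k\<in>K. d * measure M (L k))"
    using assms(3-5) by (intro sum_mono abs_set_integral_diff_const_le) auto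
  also have "\<dots> = d * measure M (\<Union>k\<in>K. L k)"
    using assms(1-3) by (subst measure_finite_Union) (auto simp: sum_distrib_left)
  finally show ?thesis .
qed

lemma finite_partition_small_oscillation:
  fixes Fs :: "('a \<Rightarrow> real) set"
  assumes "finite Fs" "D \<in> sets M" "d > 0"
    and meas: "\<And>g. g \<in> Fs \<Longrightarrow> g \<in> borel_measurable M"
    and bdd: "\<And>g. g \<in> Fs \<Longrightarrow> \<exists>B. \<forall>x\<in>D. \<bar>g x\<bar> \<le> B"
  obtains \<C> where "finite \<C>" "disjoint \<C>" "{} \<notin> \<C>" "\<Union>\<C> = D" "\<And>C. C \<in> \<C> \<Longrightarrow> C \<in> sets M"
    "\<And>g C x y. g \<in> Fs \<Longrightarrow> C \<in> \<C> \<Longrightarrow> x \<in> C \<Longrightarrow> y \<in> C \<Longrightarrow> \<bar>g x - g y\<bar> \<le> d"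
proof -
  \<comment> \<open>The cells are the fibres of \<open>x \<mapsto> (\<lfloor>g x / d\<rfloor>)\<^bsub>g \<in> Fs\<^esub>\<close> on \<open>D\<close>.\<close>
  define key where "key x = (\<lambda>g\<in>Fs. \<lfloor>g x / d\<rfloor>)" for x
  define cell where "cell k = {x \<in> D. key x = k}" for k
  have key_eq_iff: "key x = key y \<longleftrightarrow> (\<forall>g\<in>Fs. \<lfloor>g x / d\<rfloor> = \<lfloor>g y / d\<rfloor>)" for x y
    unfolding key_def by (rule restrict_eq_restrict_iff)
  have "finite (key ` D)"
    unfolding key_def[abs_def] using assms(1,3) bdd by (rule finite_image_restrict_floor_divide)
  show ?thesis
  proof
    show "finite (cell ` key ` D)"
      using \<open>finite (key ` D)\<close> by simp
    show "disjoint (cell ` key ` D)"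
    proof (rule disjointI)
      fix a b assume "a \<in> cell ` key ` D" "b \<in> cell ` key ` D" "a \<noteq> b"
      then show "a \<inter> b = {}"
        by (auto simp: cell_def)
    qed
    show "{} \<notin> cell ` key ` D"
      unfolding cell_def by blast
    show "\<Union>(cell ` key ` D) = D"
      unfolding cell_def by blast
    show "C \<in> sets M" if C: "C \<in> cell ` key ` D" for C
    proof -
      obtain y where "C = cell (key y)"
        using C by blast
      then have "C = D \<inter> {x \<in> space M. \<forall>g\<in>Fs. \<lfloor>g x / d\<rfloor> = \<lfloor>g y / d\<rfloor>}"
        using sets.sets_into_space[OF \<open>D \<in> sets M\<close>] by (auto simp: cell_def key_eq_iff)
      also have "\<dots> \<in> sets M"
        using \<open>D \<in> sets M\<close> \<open>finite Fs\<close> meas by (intro sets.Int sets.sets_Collect_finite_All) auto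
      finally show ?thesis .
    qed
    show "\<bar>g x - g y\<bar> \<le> d" if "g \<in> Fs" "C \<in> cell ` key ` D" "x \<in> C" "y \<in> C" for g C x y
    proof -
      have "key x = key y"
        using that(2-4) by (auto simp: cell_def)
      then have "\<lfloor>g x / d\<rfloor> = \<lfloor>g y / d\<rfloor>"
        using \<open>g \<in> Fs\<close> unfolding key_eq_iff by blast
      then show ?thesis
        by (rule less_imp_le[OF abs_diff_less_if_floor_divide_eq[OF \<open>d > 0\<close>]])
    qed
  qed
qed

lemma (in finite_measure) finite_average_approx_partition:
  fixes Fs :: "('a \<Rightarrow> real) set"
  assumes "finite \<C>" "disjoint \<C>" "{} \<notin> \<C>" "\<Union>\<C> = D" "\<And>C. C \<in> \<C> \<Longrightarrow> C \<in> sets M"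
    and "measure M D > 0"
    and integrable: "\<And>g. g \<in> Fs \<Longrightarrow> set_integrable M D g"
    and osc: "\<And>g C x y. g \<in> Fs \<Longrightarrow> C \<in> \<C> \<Longrightarrow> x \<in> C \<Longrightarrow> y \<in> C \<Longrightarrow> \<bar>g x - g y\<bar> \<le> d"
  obtains P w where "finite P" "P \<subseteq> D" "\<And>x. x \<in> P \<Longrightarrow> 0 \<le> w x" "sum w P = 1"
    "\<And>g. g \<in> Fs \<Longrightarrow> \<bar>(\<Sum>x\<in>P. w x * g x) - (LINT x:D|M. g x) / measure M D\<bar> \<le> d"
proof -
  define p where "p C = (SOME x. x \<in> C)" for C :: "'a set"
  have p: "p C \<in> C" if "C \<in> \<C>" for C
    using that \<open>{} \<notin> \<C>\<close> unfolding p_def by (metis ex_in_conv someI_ex)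
  have disjoint: "disjoint_family_on (\<lambda>C. C) \<C>"
    using \<open>disjoint \<C>\<close> by (simp add: disjoint_family_on_def disjoint_def)
  have "inj_on p \<C>"
    using p \<open>disjoint \<C>\<close> by (intro inj_onI) (metis disjoint_def disjoint_iff)
  have D_eq: "D = (\<Union>C\<in>\<C>. C)"
    using \<open>\<Union>\<C> = D\<close> by simp
  define w where "w x = measure M (inv_into \<C> p x) / measure M D" for x
  have sum_reindex: "(\<Sum>x\<in>p ` \<C>. w x * f x) = (\<Sum>C\<in>\<C>. measure M C * f (p C)) / measure M D" for f
    using \<open>inj_on p \<C>\<close> by (simp add: sum.reindex w_def sum_divide_distrib)
  show ?thesis
  proof
    show "finite (p ` \<C>)" "p ` \<C> \<subseteq> D"
      using \<open>finite \<C>\<close> p D_eq by auto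
    show "0 \<le> w x" for x
      using \<open>measure M D > 0\<close> by (simp add: w_def)
    have "measure M D = (\<Sum>C\<in>\<C>. measure M C)"
      unfolding D_eq by (rule measure_finite_Union) (use \<open>finite \<C>\<close> disjoint assms(5) in auto)
    then show "sum w (p ` \<C>) = 1"
      using sum_reindex[of "\<lambda>_. 1"] \<open>measure M D > 0\<close> by simp
    fix g assume "g \<in> Fs"
    have "set_integrable M C g" if "C \<in> \<C>" for C
      using set_integrable_subset[OF integrable[OF \<open>g \<in> Fs\<close>] assms(5)[OF that]] that D_eq by blast
    then have "\<bar>(LINT x:D|M. g x) - (\<Sum>C\<in>\<C>. measure M C * g (p C))\<bar> \<le> d * measure M D"
      unfolding D_eq using \<open>finite \<C>\<close> disjoint assms(5) osc[OF \<open>g \<in> Fs\<close> _ _ p]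
      by (intro set_integral_Riemann_sum_approx) auto
    then show "\<bar>(\<Sum>x\<in>p ` \<C>. w x * g x) - (LINT x:D|M. g x) / measure M D\<bar> \<le> d"
      using \<open>measure M D > 0\<close>
      by (simp add: sum_reindex abs_minus_commute divide_le_eq flip: diff_divide_distrib)
  qed
qed

lemma (in finite_measure) set_integrable_bounded:
  fixes g :: "'a \<Rightarrow> real"
  assumes "D \<in> sets M" "g \<in> borel_measurable M" "\<And>x. x \<in> D \<Longrightarrow> \<bar>g x\<bar> \<le> B"
  shows "set_integrable M D g"
  unfolding set_integrable_def
proof (rule integrable_const_bound[where B="max B 0"])
  show "AE x in M. norm (indicator D x *\<^sub>R g x) \<le> max B 0"
    using assms(3) by (intro AE_I2) (auto simp: indicator_def le_max_iff_disj)
  show "(\<lambda>x. indicator D x *\<^sub>R g x) \<in> borel_measurable M"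
    using assms(1,2) by measurable
qed

lemma (in finite_measure) finite_average_approx_set_integral:
  fixes Fs :: "('a \<Rightarrow> real) set"
  assumes "finite Fs" "D \<in> sets M" "measure M D > 0" "d > 0"
    and meas: "\<And>g. g \<in> Fs \<Longrightarrow> g \<in> borel_measurable M"
    and bdd: "\<And>g. g \<in> Fs \<Longrightarrow> \<exists>B. \<forall>x\<in>D. \<bar>g x\<bar> \<le> B"
  obtains P w where "finite P" "P \<subseteq> D" "\<And>x. x \<in> P \<Longrightarrow> 0 \<le> w x" "sum w P = 1"
    "\<And>g. g \<in> Fs \<Longrightarrow> \<bar>(\<Sum>x\<in>P. w x * g x) - (LINT x:D|M. g x) / measure M D\<bar> \<le> d"
proof -
  obtain \<C> where \<C>: "finite \<C>" "disjoint \<C>" "{} \<notin> \<C>" "\<Union>\<C> = D" "\<And>C. C \<in> \<C> \<Longrightarrow> C \<in> sets M"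
    and osc: "\<And>g C x y. g \<in> Fs \<Longrightarrow> C \<in> \<C> \<Longrightarrow> x \<in> C \<Longrightarrow> y \<in> C \<Longrightarrow> \<bar>g x - g y\<bar> \<le> d"
    using finite_partition_small_oscillation[OF assms(1,2,4) meas bdd] by blast
  have integrable: "set_integrable M D g" if "g \<in> Fs" for g
    using bdd[OF that] set_integrable_bounded[OF \<open>D \<in> sets M\<close> meas[OF that]] by blast
  show ?thesis
    by (rule finite_average_approx_partition[OF \<C> assms(3) integrable osc that])
qed

lemma (in prob_space) set_integral_add_compl:
  fixes f :: "'a \<Rightarrow> real"
  assumes "D \<in> sets M" "integrable M f"
  shows "(LINT x:D|M. f x) + (LINT x:space M - D|M. f x) = expectation f"
  unfolding set_lebesgue_integral_def
proof (subst Bochner_Integration.integral_add[symmetric])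
  have "integrable M (\<lambda>x. indicator A x *\<^sub>R f x)" if "A \<in> sets M" for A
    using that assms(2) by (rule integrable_mult_indicator)
  then show "integrable M (\<lambda>x. indicator D x *\<^sub>R f x)" "integrable M (\<lambda>x. indicator (space M - D) x *\<^sub>R f x)"
    using assms(1) by auto
  show "(\<integral>x. indicator D x *\<^sub>R f x + indicator (space M - D) x *\<^sub>R f x \<partial>M) = expectation f"
    by (rule Bochner_Integration.integral_cong) (auto split: split_indicator)
qed

lemma (in prob_space) abs_set_integral_divide_measure_diff_le:
  fixes f :: "'a \<Rightarrow> real"
  assumes D: "D \<in> sets M" "measure M D > 0" and f: "f \<in> borel_measurable M" "\<And>x. x \<in> space M \<Longrightarrow> \<bar>f x\<bar> \<le> B"
  shows "\<bar>(LINT x:D|M. f x) / measure M D - expectation f\<bar> \<le> 2 * B * (1 - measure M D)"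
proof -
  define q where "q = measure M D"
  have "q \<le> 1"
    by (simp add: q_def)
  have "integrable M f"
    using f by (intro integrable_const_bound[where B=B]) auto
  have set_integrable: "set_integrable M A f" if "A \<in> sets M" for A
    unfolding set_integrable_def using that \<open>integrable M f\<close> by (rule integrable_mult_indicator)
  have "\<bar>f x\<bar> \<le> B" if "x \<in> D" for x
    using f(2) sets.sets_into_space[OF D(1)] that by blast
  then have in_D: "\<bar>LINT x:D|M. f x\<bar> \<le> B * q"
    using abs_set_integral_diff_const_le[of D f 0 B] D set_integrable by (simp add: q_def)
  have "\<bar>LINT x:space M - D|M. f x\<bar> \<le> B * measure M (space M - D)"
    using abs_set_integral_diff_const_le[of "space M - D" f 0 B] D set_integrable f by auto
  also have "measure M (space M - D) = 1 - q"
    using D prob_compl by (simp add: q_def)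
  finally have in_compl: "\<bar>LINT x:space M - D|M. f x\<bar> \<le> B * (1 - q)" .
  have "(LINT x:D|M. f x) / q - (LINT x:D|M. f x) = (LINT x:D|M. f x) * ((1 - q) / q)"
    using D by (simp add: q_def field_simps)
  then have "\<bar>(LINT x:D|M. f x) / q - (LINT x:D|M. f x)\<bar> = \<bar>LINT x:D|M. f x\<bar> * ((1 - q) / q)"
    using D \<open>q \<le> 1\<close> by (simp add: q_def abs_mult)
  also have "\<dots> \<le> B * q * ((1 - q) / q)"
    using in_D D \<open>q \<le> 1\<close> by (intro mult_right_mono) (auto simp: q_def)
  also have "\<dots> = B * (1 - q)"
    using D by (simp add: q_def)
  finally show ?thesis
    using in_compl set_integral_add_compl[OF D(1) \<open>integrable M f\<close>] by (simp add: q_def abs_le_iff)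
qed

lemma (in prob_space) measure_sublevel_tendsto_1:
  fixes e :: "'a \<Rightarrow> real"
  assumes G: "G \<in> sets M" "AE x in M. x \<in> G" and [measurable]: "e \<in> borel_measurable M"
  shows "(\<lambda>n. measure M {x \<in> G. e x \<le> real n}) \<longlonglongrightarrow> 1"
proof -
  have "{x \<in> G. e x \<le> real n} = G \<inter> {x \<in> space M. e x \<le> real n}" for n
    using sets.sets_into_space[OF G(1)] by auto
  then have "(\<lambda>n. measure M {x \<in> G. e x \<le> real n}) \<longlonglongrightarrow> measure M (\<Union>n. {x \<in> G. e x \<le> real n})"
    using G(1) by (intro finite_Lim_measure_incseq) (auto simp: incseq_def)
  moreover have "(\<Union>n. {x \<in> G. e x \<le> real n}) = G"
  proof (intro equalityI subsetI)
    fix x assume "x \<in> G"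
    moreover obtain n where "e x \<le> real n"
      using real_arch_simple by blast
    ultimately show "x \<in> (\<Union>n. {x \<in> G. e x \<le> real n})"
      by auto
  qed auto
  moreover have "measure M G = 1"
    using emeasure_eq_1_AE[OF G] by (simp add: emeasure_eq_measure)
  ultimately show ?thesis
    by simp
qed

lemma (in prob_space) eventually_set_integral_divide_measure_close:
  fixes f :: "'a \<Rightarrow> real"
  assumes D: "\<And>n. D n \<in> sets M" "(\<lambda>n. measure M (D n)) \<longlonglongrightarrow> 1"
    and f: "f \<in> borel_measurable M" "\<And>x. x \<in> space M \<Longrightarrow> \<bar>f x\<bar> \<le> B" and "\<epsilon> > 0"
  shows "eventually (\<lambda>n. \<bar>(LINT x:D n|M. f x) / measure M (D n) - expectation f\<bar> < \<epsilon>) sequentially"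
proof -
  have "(\<lambda>n. 2 * B * (1 - measure M (D n))) \<longlonglongrightarrow> 2 * B * (1 - 1)"
    by (intro tendsto_intros D(2))
  then have "eventually (\<lambda>n. 2 * B * (1 - measure M (D n)) < \<epsilon>) sequentially"
    by (rule order_tendstoD(2)) (simp add: \<open>\<epsilon> > 0\<close>)
  moreover have "eventually (\<lambda>n. 0 < measure M (D n)) sequentially"
    using D(2) by (rule order_tendstoD(1)) simp
  ultimately show ?thesis
  proof eventually_elim
    case (elim n)
    then have "\<bar>(LINT x:D n|M. f x) / measure M (D n) - expectation f\<bar> \<le> 2 * B * (1 - measure M (D n))"
      using D(1) f by (intro abs_set_integral_divide_measure_diff_le) auto
    with elim(1) show ?case
      by linarith
  qed
qed

lemma (in prob_space) set_integral_le_expectation: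
  fixes e :: "'a \<Rightarrow> real"
  assumes "D \<in> sets M" "integrable M e" "\<And>x. x \<in> space M \<Longrightarrow> 0 \<le> e x"
  shows "(LINT x:D|M. e x) \<le> expectation e"
proof -
  have "(LINT x:space M - D|M. e x) \<ge> 0"
    unfolding set_lebesgue_integral_def using assms(3) by (auto intro!: integral_nonneg_AE split: split_indicator)
  then show ?thesis
    using set_integral_add_compl[OF assms(1,2)] by linarith
qed

lemma (in prob_space) exists_sublevel_set_approx:
  fixes Fs :: "('a \<Rightarrow> real) set" and e :: "'a \<Rightarrow> real"
  assumes "finite Fs" and meas: "\<And>f. f \<in> Fs \<Longrightarrow> f \<in> borel_measurable M"
    and bdd: "\<And>f. f \<in> Fs \<Longrightarrow> \<exists>B. \<forall>x\<in>space M. \<bar>f x\<bar> \<le> B"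
    and [measurable]: "e \<in> borel_measurable M" and G: "G \<in> sets M" "AE x in M. x \<in> G" and "\<epsilon> > 0"
  obtains n where "{x \<in> G. e x \<le> real n} \<in> sets M" "0 < measure M {x \<in> G. e x \<le> real n}"
    "expectation e / measure M {x \<in> G. e x \<le> real n} < expectation e + \<epsilon>"
    "\<And>f. f \<in> Fs \<Longrightarrow>
      \<bar>(LINT x:{x \<in> G. e x \<le> real n}|M. f x) / measure M {x \<in> G. e x \<le> real n} - expectation f\<bar> < \<epsilon>"
proof -
  define D where "D n = {x \<in> G. e x \<le> real n}" for n :: nat
  have D_sets: "D n \<in> sets M" for n
  proof -
    have "D n = G \<inter> {x \<in> space M. e x \<le> real n}"
      using sets.sets_into_space[OF G(1)] by (auto simp: D_def)
    also have "\<dots> \<in> sets M"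
      using G(1) by measurable
    finally show ?thesis .
  qed
  have lim_D: "(\<lambda>n. measure M (D n)) \<longlonglongrightarrow> 1"
    unfolding D_def using G by (rule measure_sublevel_tendsto_1) simp
  have "eventually (\<lambda>n. \<bar>(LINT x:D n|M. f x) / measure M (D n) - expectation f\<bar> < \<epsilon>) sequentially"
    if "f \<in> Fs" for f
  proof -
    obtain B where "\<forall>x\<in>space M. \<bar>f x\<bar> \<le> B"
      using bdd[OF \<open>f \<in> Fs\<close>] by blast
    then show ?thesis
      using D_sets lim_D meas[OF \<open>f \<in> Fs\<close>] \<open>\<epsilon> > 0\<close>
      by (intro eventually_set_integral_divide_measure_close) auto
  qed
  then have "eventually (\<lambda>n. \<forall>f\<in>Fs. \<bar>(LINT x:D n|M. f x) / measure M (D n) - expectation f\<bar> < \<epsilon>) sequentially"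
    by (intro eventually_ball_finite[OF \<open>finite Fs\<close>]) blast
  moreover have "eventually (\<lambda>n. 0 < measure M (D n)) sequentially"
    using lim_D by (rule order_tendstoD(1)) simp
  moreover have "(\<lambda>n. expectation e / measure M (D n)) \<longlonglongrightarrow> expectation e / 1"
    by (intro tendsto_intros lim_D) simp
  then have "eventually (\<lambda>n. expectation e / measure M (D n) < expectation e + \<epsilon>) sequentially"
    by (rule order_tendstoD(2)) (simp add: \<open>\<epsilon> > 0\<close>)
  ultimately have "eventually (\<lambda>n. (\<forall>f\<in>Fs. \<bar>(LINT x:D n|M. f x) / measure M (D n) - expectation f\<bar> < \<epsilon>) \<and>
      0 < measure M (D n) \<and> expectation e / measure M (D n) < expectation e + \<epsilon>) sequentially"
    by (intro eventually_conj)
  then obtain n where "\<forall>f\<in>Fs. \<bar>(LINT x:D n|M. f x) / measure M (D n) - expectation f\<bar> < \<epsilon>"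
    "0 < measure M (D n)" "expectation e / measure M (D n) < expectation e + \<epsilon>"
    unfolding eventually_sequentially by blast
  with D_sets[of n] show ?thesis
    unfolding D_def using that by blast
qed

lemma (in prob_space) finite_average_approx:
  fixes Fs :: "('a \<Rightarrow> real) set" and e :: "'a \<Rightarrow> real"
  assumes "finite Fs" and meas: "\<And>f. f \<in> Fs \<Longrightarrow> f \<in> borel_measurable M"
    and bdd: "\<And>f. f \<in> Fs \<Longrightarrow> \<exists>B. \<forall>x\<in>space M. \<bar>f x\<bar> \<le> B"
    and e: "integrable M e" "\<And>x. x \<in> space M \<Longrightarrow> 0 \<le> e x"
    and G: "G \<in> sets M" "AE x in M. x \<in> G" and "\<delta> > 0"
  obtains P w where "finite P" "P \<subseteq> G" "\<And>x. x \<in> P \<Longrightarrow> 0 \<le> w x" "sum w P = 1"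
    "\<And>f. f \<in> Fs \<Longrightarrow> \<bar>(\<Sum>x\<in>P. w x * f x) - expectation f\<bar> < \<delta>"
    "(\<Sum>x\<in>P. w x * e x) < expectation e + \<delta>"
proof -
  have "e \<in> borel_measurable M"
    using e(1) by simp
  \<comment> \<open>On a sublevel set \<open>e\<close> is bounded, so it can be discretised together with the \<open>f \<in> Fs\<close>.\<close>
  then obtain n where D: "{x \<in> G. e x \<le> real n} \<in> sets M" "0 < measure M {x \<in> G. e x \<le> real n}"
    and D_e: "expectation e / measure M {x \<in> G. e x \<le> real n} < expectation e + \<delta> / 2"
    and D_f: "\<And>f. f \<in> Fs \<Longrightarrow> \<bar>(LINT x:{x \<in> G. e x \<le> real n}|M. f x) / measure M {x \<in> G. e x \<le> real n}
        - expectation f\<bar> < \<delta> / 2"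
    using exists_sublevel_set_approx[OF \<open>finite Fs\<close> meas bdd _ G, of e "\<delta> / 2"] \<open>\<delta> > 0\<close> by auto
  define D where "D = {x \<in> G. e x \<le> real n}"
  have bdd_D: "\<exists>B. \<forall>x\<in>D. \<bar>g x\<bar> \<le> B" if g: "g \<in> insert e Fs" for g
  proof (cases "g = e")
    case True
    then show ?thesis
      using e(2) sets.sets_into_space[OF G(1)] by (intro exI[of _ "real n"]) (auto simp: D_def)
  next
    case False
    then obtain B where "\<forall>x\<in>space M. \<bar>g x\<bar> \<le> B"
      using bdd g by blast
    then show ?thesis
      using sets.sets_into_space[OF D(1)] by (auto simp: D_def)
  qed
  obtain P w where P: "finite P" "P \<subseteq> D" "\<And>x. x \<in> P \<Longrightarrow> 0 \<le> w x" "sum w P = 1"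
    and approx: "\<And>g. g \<in> insert e Fs \<Longrightarrow> \<bar>(\<Sum>x\<in>P. w x * g x) - (LINT x:D|M. g x) / measure M D\<bar> \<le> \<delta> / 2"
    by (rule finite_average_approx_set_integral[of "insert e Fs" D "\<delta> / 2"])
      (use \<open>finite Fs\<close> D \<open>\<delta> > 0\<close> \<open>e \<in> borel_measurable M\<close> meas bdd_D in \<open>auto simp: D_def\<close>)
  show ?thesis
  proof
    show "finite P" "sum w P = 1" "\<And>x. x \<in> P \<Longrightarrow> 0 \<le> w x" "P \<subseteq> G"
      using P by (auto simp: D_def)
    show "\<bar>(\<Sum>x\<in>P. w x * f x) - expectation f\<bar> < \<delta>" if "f \<in> Fs" for f
      using approx[of f, OF insertI2[OF that]] D_f[OF that] unfolding D_def abs_le_iff abs_less_iff by linarith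
    have "(LINT x:D|M. e x) / measure M D \<le> expectation e / measure M D"
      using set_integral_le_expectation[OF D(1) e] D(2) unfolding D_def by (rule divide_right_mono[OF _ less_imp_le])
    then show "(\<Sum>x\<in>P. w x * e x) < expectation e + \<delta>"
      using approx[of e, OF insertI1] D_e unfolding D_def abs_le_iff by linarith
  qed
qed

lemma
  fixes f :: "'a \<Rightarrow> ennreal"
  assumes "f \<in> borel_measurable M" "(\<integral>\<^sup>+x. f x \<partial>M) < \<top>"
  shows integrable_enn2real: "integrable M (\<lambda>x. enn2real (f x))"
    and ennreal_integral_enn2real: "ennreal (\<integral>x. enn2real (f x) \<partial>M) = (\<integral>\<^sup>+x. f x \<partial>M)"
proof -
  have "AE x in M. ennreal (enn2real (f x)) = f x"
    using nn_integral_PInf_AE[OF assms(1)] assms(2) by (auto simp: less_top)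
  then have nn_integral_eq: "(\<integral>\<^sup>+x. ennreal (enn2real (f x)) \<partial>M) = (\<integral>\<^sup>+x. f x \<partial>M)"
    by (rule nn_integral_cong_AE)
  then show "integrable M (\<lambda>x. enn2real (f x))"
    using assms by (intro integrableI_nonneg) auto
  then show "ennreal (\<integral>x. enn2real (f x) \<partial>M) = (\<integral>\<^sup>+x. f x \<partial>M)"
    using nn_integral_eq by (simp add: nn_integral_eq_integral)
qed

lemma Plans_graph_integral:
  fixes m :: "'x::second_countable_topology measure" and \<mu> :: "('x \<times> 'y::{second_countable_topology, metric_space}) measure"
  assumes m: "sets m = sets borel" "finite_measure m" and Q: "Q \<in> Plans m \<mu>" and \<phi>: "\<phi> \<in> Cb"
  shows "graph_integral m \<phi> \<in> borel_measurable Q"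
    and "\<exists>B. \<forall>u\<in>space Q. \<bar>graph_integral m \<phi> u\<bar> \<le> B"
    and "(\<integral>z. \<phi> z \<partial>\<mu>) = (\<integral>u. graph_integral m \<phi> u \<partial>Q)"
proof -
  have space_Q: "space Q = L0 m" and sets_Q: "sets Q = sets (L0_borel m)"
    using Q by (auto simp: Plans_def)
  show "graph_integral m \<phi> \<in> borel_measurable Q"
    using graph_integral_borel_measurable[OF m \<phi>] by (simp add: measurable_cong_sets[OF sets_Q refl])
  obtain B where "\<And>z. \<bar>\<phi> z\<bar> \<le> B"
    using Cb_bounded[OF \<phi>] by blast
  then show "\<exists>B. \<forall>u\<in>space Q. \<bar>graph_integral m \<phi> u\<bar> \<le> B"
    using graph_integral_bounded[OF m] Cb_borel_measurable[OF \<phi>] space_Q by blast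
  show "(\<integral>z. \<phi> z \<partial>\<mu>) = (\<integral>u. graph_integral m \<phi> u \<partial>Q)"
    using Q \<phi> by (simp add: Plans_def graph_integral_def)
qed

lemma plan_finite_approx:
  fixes m :: "'x::second_countable_topology measure"
    and E :: "('x \<Rightarrow> 'y::{second_countable_topology, metric_space}) \<Rightarrow> ennreal"
  assumes m: "sets m = sets borel" "finite_measure m"
    and E: "E \<in> borel_measurable (L0_borel m)"
    and Q: "Q \<in> Plans m \<mu>" and E_less: "(\<integral>\<^sup>+u. E u \<partial>Q) < ennreal c"
    and \<Phi>: "finite \<Phi>" "\<Phi> \<subseteq> Cb" and "\<delta> > 0"
  obtains P w where "finite P" "P \<subseteq> L0 m" "\<And>u. u \<in> P \<Longrightarrow> 0 \<le> w u" "sum w P = 1"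
    "\<And>\<phi>. \<phi> \<in> \<Phi> \<Longrightarrow> \<bar>(\<Sum>u\<in>P. w u * graph_integral m \<phi> u) - (\<integral>z. \<phi> z \<partial>\<mu>)\<bar> < \<delta>"
    "(\<Sum>u\<in>P. ennreal (w u) * E u) < ennreal c"
proof -
  interpret prob_space Q
    using Q by (simp add: Plans_def)
  have space_Q: "space Q = L0 m" and sets_Q: "sets Q = sets (L0_borel m)"
    using Q by (auto simp: Plans_def)
  have [measurable]: "E \<in> borel_measurable Q"
    using E by (simp add: measurable_cong_sets[OF sets_Q refl])
  define e where "e u = enn2real (E u)" for u
  have [measurable]: "e \<in> borel_measurable Q"
    unfolding e_def by measurable
  define G where "G = {u \<in> space Q. E u < \<top>}"
  have "G \<in> sets Q"
    unfolding G_def by measurable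
  have "(\<integral>\<^sup>+u. E u \<partial>Q) < \<top>"
    using E_less ennreal_less_top by (rule order.strict_trans)
  then have "AE u in Q. u \<in> G"
    using nn_integral_PInf_AE[of E Q] by (auto simp: G_def top.not_eq_extremum)
  have "integrable Q e"
    unfolding e_def using \<open>(\<integral>\<^sup>+u. E u \<partial>Q) < \<top>\<close> by (rule integrable_enn2real[rotated]) simp
  have "ennreal (expectation e) < ennreal c"
    using ennreal_integral_enn2real[of E Q] \<open>(\<integral>\<^sup>+u. E u \<partial>Q) < \<top>\<close> E_less
    by (simp add: e_def[abs_def])
  then have "expectation e < c"
    by (simp add: ennreal_less_iff e_def)
  define \<delta>' where "\<delta>' = min \<delta> (c - expectation e)"
  have "\<delta>' > 0"
    using \<open>\<delta> > 0\<close> \<open>expectation e < c\<close> by (simp add: \<delta>'_def)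
  have "0 \<le> e u" for u
    by (simp add: e_def)
  obtain P w where P: "finite P" "P \<subseteq> G" "\<And>u. u \<in> P \<Longrightarrow> 0 \<le> w u" "sum w P = 1"
    and close: "\<And>f. f \<in> graph_integral m ` \<Phi> \<Longrightarrow> \<bar>(\<Sum>u\<in>P. w u * f u) - expectation f\<bar> < \<delta>'"
    and cost: "(\<Sum>u\<in>P. w u * e u) < expectation e + \<delta>'"
    by (rule finite_average_approx[of "graph_integral m ` \<Phi>" e G \<delta>'])
      (use Plans_graph_integral[OF m Q] \<Phi> \<open>0 \<le> e _\<close> \<open>integrable Q e\<close> \<open>G \<in> sets Q\<close> \<open>AE u in Q. u \<in> G\<close> \<open>\<delta>' > 0\<close> in auto)
  show ?thesis
  proof
    show "finite P" "sum w P = 1" "\<And>u. u \<in> P \<Longrightarrow> 0 \<le> w u"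
      using P by auto
    show "P \<subseteq> L0 m"
      using P(2) space_Q by (auto simp: G_def)
    show "\<bar>(\<Sum>u\<in>P. w u * graph_integral m \<phi> u) - (\<integral>z. \<phi> z \<partial>\<mu>)\<bar> < \<delta>" if "\<phi> \<in> \<Phi>" for \<phi>
      using close[of "graph_integral m \<phi>"] Plans_graph_integral(3)[OF m Q, of \<phi>] that \<Phi>(2)
      by (auto simp: \<delta>'_def)
    have "ennreal (w u) * E u = ennreal (w u * e u)" if "u \<in> P" for u
    proof -
      have "E u = ennreal (e u)"
        using P(2) that by (auto simp: G_def e_def)
      then show ?thesis
        using P(3)[OF that] \<open>0 \<le> e u\<close> by (simp add: ennreal_mult)
    qed
    then have "(\<Sum>u\<in>P. ennreal (w u) * E u) = (\<Sum>u\<in>P. ennreal (w u * e u))"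
      by (rule sum.cong[OF refl])
    also have "\<dots> = ennreal (\<Sum>u\<in>P. w u * e u)"
      by (rule sum_ennreal) (simp add: P(3) \<open>0 \<le> e _\<close>)
    also have "\<dots> < ennreal c"
      using cost P(3) by (subst ennreal_less_iff) (auto simp: \<delta>'_def e_def intro!: sum_nonneg)
    finally show "(\<Sum>u\<in>P. ennreal (w u) * E u) < ennreal c" .
  qed
qed

lemma ennreal_less_dense_real:
  fixes a b :: ennreal
  assumes "a < b"
  obtains c where "a < ennreal c" "ennreal c < b"
proof -
  obtain z where "a < z" "z < b"
    using dense[OF assms] by blast
  moreover have "ennreal (enn2real z) = z"
    using order.strict_trans2[OF \<open>z < b\<close> top_greatest] by simp
  ultimately show ?thesis
    using that by metis
qed

lemma T_le_nn_integral_plan: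
  fixes m :: "'x::second_countable_topology measure"
    and E :: "('x \<Rightarrow> 'y::{second_countable_topology, metric_space}) \<Rightarrow> ennreal"
    and T :: "('x \<times> 'y) measure \<Rightarrow> ennreal"
  assumes m: "sets m = sets borel" "finite_measure m"
    and E: "E \<in> borel_measurable (L0_borel m)"
    and conv: "convex_fun_on_Mpi m T" and lsc: "lsc_narrow m T"
    and T_graph: "\<And>u. u \<in> L0 m \<Longrightarrow> T (graph_measure m u) \<le> E u"
    and \<mu>: "\<mu> \<in> Mpi m" and Q: "Q \<in> Plans m \<mu>"
  shows "T \<mu> \<le> (\<integral>\<^sup>+u. E u \<partial>Q)"
proof (rule ccontr)
  assume "\<not> ?thesis"
  then obtain c where c: "(\<integral>\<^sup>+u. E u \<partial>Q) < ennreal c" "ennreal c < T \<mu>"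
    using ennreal_less_dense_real[of "\<integral>\<^sup>+u. E u \<partial>Q" "T \<mu>"] by (auto simp: not_le)
  obtain \<Phi> \<delta> where \<Phi>: "finite \<Phi>" "\<Phi> \<subseteq> Cb" "\<delta> > 0"
    and nbhd: "\<And>\<nu>. \<nu> \<in> Mpi m \<Longrightarrow> (\<forall>\<phi>\<in>\<Phi>. \<bar>(\<integral>z. \<phi> z \<partial>\<nu>) - (\<integral>z. \<phi> z \<partial>\<mu>)\<bar> < \<delta>) \<Longrightarrow> ennreal c < T \<nu>"
    using lsc_narrow_nbhd[OF lsc \<mu> c(2)] by blast
  obtain P w where P: "finite P" "P \<subseteq> L0 m" "\<And>u. u \<in> P \<Longrightarrow> 0 \<le> w u" "sum w P = 1"
    and close: "\<And>\<phi>. \<phi> \<in> \<Phi> \<Longrightarrow> \<bar>(\<Sum>u\<in>P. w u * graph_integral m \<phi> u) - (\<integral>z. \<phi> z \<partial>\<mu>)\<bar> < \<delta>"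
    and cost: "(\<Sum>u\<in>P. ennreal (w u) * E u) < ennreal c"
    using plan_finite_approx[OF m E Q c(1) \<Phi>] by blast
  have "\<forall>u\<in>P. graph_measure m u \<in> Mpi m"
    using graph_measure_in_Mpi[OF m] P(2) by blast
  then obtain \<rho> where "\<rho> \<in> Mpi m" and T_\<rho>: "T \<rho> \<le> (\<Sum>u\<in>P. ennreal (w u) * T (graph_measure m u))"
    and integral_\<rho>: "\<And>\<phi>. \<phi> \<in> Cb \<Longrightarrow> (\<integral>z. \<phi> z \<partial>\<rho>) = (\<Sum>u\<in>P. w u * (\<integral>z. \<phi> z \<partial>graph_measure m u))"
    using convex_fun_on_Mpi_combination[OF conv P(1)] P(3,4) by blast
  have "(\<Sum>u\<in>P. ennreal (w u) * T (graph_measure m u)) \<le> (\<Sum>u\<in>P. ennreal (w u) * E u)"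
    using T_graph P(2) by (intro sum_mono mult_left_mono) auto
  with T_\<rho> have "T \<rho> \<le> (\<Sum>u\<in>P. ennreal (w u) * E u)"
    by (rule order_trans)
  also note cost
  finally have "T \<rho> < ennreal c" .
  moreover have "ennreal c < T \<rho>"
  proof (rule nbhd[OF \<open>\<rho> \<in> Mpi m\<close>], intro ballI)
    fix \<phi> assume "\<phi> \<in> \<Phi>"
    then have "\<phi> \<in> Cb"
      using \<Phi>(2) by blast
    have "(\<integral>z. \<phi> z \<partial>\<rho>) = (\<Sum>u\<in>P. w u * (\<integral>z. \<phi> z \<partial>graph_measure m u))"
      by (rule integral_\<rho>[OF \<open>\<phi> \<in> Cb\<close>])
    also have "\<dots> = (\<Sum>u\<in>P. w u * graph_integral m \<phi> u)"
      using P(2) integral_graph_measure[OF m(1) _ Cb_borel_measurable[OF \<open>\<phi> \<in> Cb\<close>]]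
      by (intro sum.cong) auto
    finally have "(\<integral>z. \<phi> z \<partial>\<rho>) = (\<Sum>u\<in>P. w u * graph_integral m \<phi> u)" .
    with close[OF \<open>\<phi> \<in> \<Phi>\<close>] show "\<bar>(\<integral>z. \<phi> z \<partial>\<rho>) - (\<integral>z. \<phi> z \<partial>\<mu>)\<bar> < \<delta>"
      by simp
  qed
  ultimately show False
    by simp
qed

theorem mainTheorem10:
  fixes m :: "'x::polish_space measure"
    and E :: "('x \<Rightarrow> 'y::polish_space) \<Rightarrow> ennreal"
    and T :: "('x \<times> 'y) measure \<Rightarrow> ennreal"
  assumes "sets m = sets borel" and "finite_measure m"
    and "E \<in> borel_measurable (L0_borel m)"
    and "convex_fun_on_Mpi m T" and "lsc_narrow m T"
    and "\<And>u. u \<in> L0 m \<Longrightarrow> T (graph_measure m u) \<le> E u"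
  shows "\<forall>\<mu>\<in>Mpi m. T \<mu> \<le> T_E m E \<mu>"
  unfolding T_E_def using T_le_nn_integral_plan[OF assms] by (auto intro: INF_greatest)

end
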